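(* There is a constant $K\leqslant\frac{\pi^2}{6}$ with the following properties. (a) $\|z\|_{\pi,n}\leqslant 2K\|z\|_{ah,2n+1}$ for every $n\in\mathbb{N}$ and every $z\in\mathcal{S}\otimes\mathcal{S}$. (b) For every continuous bilinear form $u\colon\mathcal{S}\times\mathcal{S}\to\mathbb{C}$, every $n,m\in\mathbb{N}$ and all $x_1,\dots,x_m,y_1,\dots,y_m\in\mathcal{S}$, \[\Big|\sum_{j=1}^mu(x_j,y_j)\Big|\leqslant K\|u\|_n^*\,\|(x_j)\|_{2n+1}^{rc}\,\|(y_j)\|_{2n+1}^{rc}.\] (c) In particular, for every $\phi\in\mathcal{S}'$, every $n,m\in\mathbb{N}$ and all $x_1,\dots,x_m\in\mathcal{S}$, \[\sum_{j=1}^m|\phi(x_j)|^2\leqslant K\big(\|\phi\|_n^*\,\|(x_j)\|_{2n+1}^{rc}\big)^2.\]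
   Context: Let $\mathbb{N}=\{1,2,\dots\}$. Let $s$ be the space of complex sequences $\xi=(\xi_j)_{j\geqslant1}$ with $|\xi|_n:=(\sum_{j}|\xi_j|^2j^{2n})^{1/2}<\infty$ for all $n\in\mathbb{N}$, and let $s'$ be its dual, the space of sequences $\eta$ with $|\eta|_n':=(\sum_j|\eta_j|^2j^{-2n})^{1/2}<\infty$ for some $n$, with pairing $\langle\xi,\eta\rangle=\sum_j\xi_j\overline{\eta_j}$. The noncommutative Schwartz space $\mathcal{S}=L(s',s)$ is the Fréchet space of continuous linear operators $s'\to s$ with the topology of uniform convergence on bounded sets; it is a $*$-algebra with product $xy:=x\circ\iota\circ y$ ($\iota\colon s\hookrightarrow s'$ the inclusion) and involution given by $\langle x^*\xi,\eta\rangle=\langle\xi,x\eta\rangle$; $\mathcal{S}'$ is its topological dual. For $n\in\mathbb{N}$ and $x\in\mathcal{S}$, $\|x\|_n:=\sup\{|x\xi|_n\colon \xi\in s',\ |\xi|_n'\leqslant1\}$. For a continuous bilinear form $u$, $\|u\|_n^*:=\sup\{|u(x,y)|\colon\|x\|_n\leqslant1,\|y\|_n\leqslant1\}$, and for $\phi\in\mathcal{S}'$, $\|\phi\|_n^*:=\sup\{|\phi(x)|\colon\|x\|_n\leqslant1\}$. For $x_1,\dots,x_m\in\mathcal{S}$ and $k\in\mathbb{N}$, $\|(x_j)\|_k^{rc}:=\max\{\|\sum_jx_j^*x_j\|_k^{1/2},\|\sum_jx_jx_j^*\|_k^{1/2}\}$. On the algebraic tensor product $\mathcal{S}\otimes\mathcal{S}$: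 $\|z\|_{\pi,n}:=\inf\sum_j\|x_j\|_n\|y_j\|_n$ and $\|z\|_{ah,n}:=\inf\|\sum_j|x_j|^2\|_n^{1/2}\|\sum_j|y_j|^2\|_n^{1/2}$, where $|x|^2:=\frac12(x^*x+xx^* )$ and both infima run over all representations $z=\sum_{j=1}^mx_j\otimes y_j$. *)

theory Defs
  imports Complex_Main "HOL-Library.Extended_Real" "HOL-Library.Function_Algebras"
begin

text \<open>Index convention: the paper's index j \<in> {1,2,...} is represented by the
  natural number j-1, so the weight j^n becomes (Suc j)^n.\<close>

type_synonym seq = "nat \<Rightarrow> complex"
type_synonym mat = "nat \<Rightarrow> nat \<Rightarrow> complex"

definition s_sum :: "nat \<Rightarrow> seq \<Rightarrow> (nat \<Rightarrow> real)" where
  "s_sum n \<xi> = (\<lambda>j. (cmod (\<xi> j))\<^sup>2 * real (Suc j) ^ (2*n))"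

definition sd_sum :: "nat \<Rightarrow> seq \<Rightarrow> (nat \<Rightarrow> real)" where
  "sd_sum n \<eta> = (\<lambda>j. (cmod (\<eta> j))\<^sup>2 / real (Suc j) ^ (2*n))"

definition s_space :: "seq set" where
  "s_space = {\<xi>. \<forall>n\<ge>1. summable (s_sum n \<xi>)}"

definition s_dual :: "seq set" where
  "s_dual = {\<eta>. \<exists>n\<ge>1. summable (sd_sum n \<eta>)}"

definition snorm :: "nat \<Rightarrow> seq \<Rightarrow> real" where
  "snorm n \<xi> = sqrt (\<Sum>j. s_sum n \<xi> j)"

definition sdnorm :: "nat \<Rightarrow> seq \<Rightarrow> real" where
  "sdnorm n \<eta> = sqrt (\<Sum>j. sd_sum n \<eta> j)"

text \<open>Continuous linear operators s' \<rightarrow> s are identified with their matrices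
  (x_{ij}) (x e_j = (x_{ij})_i); these are exactly the rapidly decreasing matrices.\<close>
definition S_space :: "mat set" where
  "S_space = {x. \<forall>n. \<exists>C. \<forall>i j. cmod (x i j) * real (Suc i) ^ n * real (Suc j) ^ n \<le> C}"

definition act :: "mat \<Rightarrow> seq \<Rightarrow> seq" where
  "act x \<xi> = (\<lambda>i. \<Sum>j. x i j * \<xi> j)"

text \<open>Product xy = x \<circ> \<iota> \<circ> y and involution.\<close>
definition mmult :: "mat \<Rightarrow> mat \<Rightarrow> mat" where
  "mmult x y = (\<lambda>i k. \<Sum>j. x i j * y j k)"

definition madj :: "mat \<Rightarrow> mat" where
  "madj x = (\<lambda>i j. cnj (x j i))"

definition Snorm :: "nat \<Rightarrow> mat \<Rightarrow> real" where
  "Snorm n x = Sup {snorm n (act x \<xi>) | \<xi>. \<xi> \<in> s_dual \<and> summable (sd_sum n \<xi>) \<and> sdnorm n \<xi> \<le> 1}"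

definition msq :: "mat \<Rightarrow> mat" where
  "msq x = (\<lambda>i j. (mmult (madj x) x i j + mmult x (madj x) i j) / 2)"

definition rcnorm :: "nat \<Rightarrow> nat \<Rightarrow> (nat \<Rightarrow> mat) \<Rightarrow> real" where
  "rcnorm k m x = max (sqrt (Snorm k (\<Sum>j\<in>{1..m}. mmult (madj (x j)) (x j))))
                      (sqrt (Snorm k (\<Sum>j\<in>{1..m}. mmult (x j) (madj (x j)))))"

text \<open>Continuous (bi)linear forms on S. The Fr\'echet topology of S is given by the
  increasing norms \<parallel>.\<parallel>_n.\<close>
definition cont_bilinear :: "(mat \<Rightarrow> mat \<Rightarrow> complex) \<Rightarrow> bool" where
  "cont_bilinear u \<longleftrightarrow>
     (\<forall>x\<in>S_space. \<forall>x'\<in>S_space. \<forall>y\<in>S_space. \<forall>c::complex.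
        u (x + x') y = u x y + u x' y \<and> u y (x + x') = u y x + u y x' \<and>
        u (\<lambda>i j. c * x i j) y = c * u x y \<and> u y (\<lambda>i j. c * x i j) = c * u y x) \<and>
     (\<exists>n\<ge>1. \<exists>C. \<forall>x\<in>S_space. \<forall>y\<in>S_space. cmod (u x y) \<le> C * Snorm n x * Snorm n y)"

definition S_dual :: "(mat \<Rightarrow> complex) set" where
  "S_dual = {\<phi>. (\<forall>x\<in>S_space. \<forall>y\<in>S_space. \<forall>c::complex.
        \<phi> (x + y) = \<phi> x + \<phi> y \<and> \<phi> (\<lambda>i j. c * x i j) = c * \<phi> x) \<and>
     (\<exists>n\<ge>1. \<exists>C. \<forall>x\<in>S_space. cmod (\<phi> x) \<le> C * Snorm n x)}"

definition bnorm_star :: "nat \<Rightarrow> (mat \<Rightarrow> mat \<Rightarrow> complex) \<Rightarrow> ereal" where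
  "bnorm_star n u = Sup {ereal (cmod (u x y)) | x y. x \<in> S_space \<and> y \<in> S_space \<and>
                           Snorm n x \<le> 1 \<and> Snorm n y \<le> 1}"

definition fnorm_star :: "nat \<Rightarrow> (mat \<Rightarrow> complex) \<Rightarrow> ereal" where
  "fnorm_star n \<phi> = Sup {ereal (cmod (\<phi> x)) | x. x \<in> S_space \<and> Snorm n x \<le> 1}"

text \<open>Algebraic tensor product S \<otimes> S, realised (injectively) as kernels on
  (\<nat>\<times>\<nat>)\<times>(\<nat>\<times>\<nat>): x \<otimes> y = ((i,j),(k,l)) \<mapsto> x_{ij} y_{kl}.\<close>
type_synonym tens = "nat \<times> nat \<Rightarrow> nat \<times> nat \<Rightarrow> complex"

definition tensor :: "mat \<Rightarrow> mat \<Rightarrow> tens" where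
  "tensor x y = (\<lambda>(i,j) (k,l). x i j * y k l)"

definition reps :: "tens \<Rightarrow> (nat \<times> (nat \<Rightarrow> mat) \<times> (nat \<Rightarrow> mat)) set" where
  "reps z = {(m, x, y). (\<forall>j\<in>{1..m}. x j \<in> S_space \<and> y j \<in> S_space) \<and>
                       z = (\<Sum>j\<in>{1..m}. tensor (x j) (y j))}"

definition SS_tensor :: "tens set" where
  "SS_tensor = {z. reps z \<noteq> {}}"

definition pi_norm :: "nat \<Rightarrow> tens \<Rightarrow> real" where
  "pi_norm n z = Inf {(\<Sum>j\<in>{1..m}. Snorm n (x j) * Snorm n (y j)) | m x y. (m, x, y) \<in> reps z}"

definition ah_norm :: "nat \<Rightarrow> tens \<Rightarrow> real" where
  "ah_norm n z = Inf {sqrt (Snorm n (\<Sum>j\<in>{1..m}. msq (x j))) * sqrt (Snorm n (\<Sum>j\<in>{1..m}. msq (y j)))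
                      | m x y. (m, x, y) \<in> reps z}"

end

theory Submission
  imports Defs "HOL-Analysis.Analysis"
begin

text \<open>Everything rests on one estimate: for x_1, ..., x_m in S,
  \<Sum>_j \<parallel>x_j\<parallel>_n^2 \<le> (\<pi>^2/6) D as soon as D bounds l^{4n+2} times the l-th diagonal entry of
  \<Sum>_j |x_j|^2 for every l. By Cauchy-Schwarz, \<parallel>x\<parallel>_n is at most the weighted Hilbert-Schmidt norm
  (\<Sum>_{i,l} |x_{il}|^2 i^{2n} l^{2n})^{1/2}; the inequality i^{2n} l^{2n} \<le> (i^{4n} + l^{4n})/2 bounds its
  square by \<Sum>_l l^{4n} (|x|^2)_{ll}, and the remaining weights l^{-2} sum to \<pi>^2/6.
  Testing \<parallel>.\<parallel>_{2n+1} on unit vectors shows that D = \<parallel>\<Sum>_j |x_j|^2\<parallel>_{2n+1} is admissible, and so is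
  (\<parallel>(x_j)\<parallel>^{rc}_{2n+1})^2, because (|x|^2)_{ll} is the mean of (x^*x)_{ll} and (xx^*)_{ll}.
  Cauchy-Schwarz over j then yields all three parts with K = \<pi>^2/6.\<close>

lemma summable_inverse_squares: "summable (\<lambda>n. 1 / (real (Suc n))\<^sup>2)"
  using inverse_squares_sums by (simp add: sums_iff add.commute)

lemma suminf_inverse_squares: "(\<Sum>n. 1 / (real (Suc n))\<^sup>2) = pi\<^sup>2 / 6"
  using inverse_squares_sums by (simp add: sums_iff add.commute)

lemma sum_inverse_squares_le: "(\<Sum>n<N. 1 / (real (Suc n))\<^sup>2) \<le> pi\<^sup>2 / 6"
  using sum_le_suminf[OF summable_inverse_squares, of "{..<N}"] suminf_inverse_squares by simp

lemma square_le_of_decay: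
  fixes t s C :: real
  assumes "0 < s" "\<bar>t\<bar> * s \<le> C"
  shows "t\<^sup>2 \<le> C\<^sup>2 * (1 / s\<^sup>2)"
proof -
  have "\<bar>t\<bar> \<le> C / s" using assms by (simp add: pos_le_divide_eq)
  hence "\<bar>t\<bar>\<^sup>2 \<le> (C / s)\<^sup>2" by (intro power_mono) auto
  thus ?thesis by (simp add: power_divide)
qed

lemma summable_square_of_decay:
  fixes f :: "nat \<Rightarrow> real"
  assumes "\<And>j. \<bar>f j\<bar> * real (Suc j) \<le> C"
  shows "summable (\<lambda>j. (f j)\<^sup>2)"
  by (rule summable_comparison_test'[OF summable_mult[OF summable_inverse_squares, of "C\<^sup>2"]])
     (use square_le_of_decay assms in auto)

lemma sum_apply: "(\<Sum>j\<in>F. f j) a = (\<Sum>j\<in>F. f j a)"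
  by (induction F rule: infinite_finite_induct) auto

lemma sum_mult_le_of_sum_sq_le:
  fixes a b :: "'a \<Rightarrow> real"
  assumes "\<And>j. j \<in> F \<Longrightarrow> 0 \<le> a j" "\<And>j. j \<in> F \<Longrightarrow> 0 \<le> b j" "0 \<le> K"
    and "(\<Sum>j\<in>F. (a j)\<^sup>2) \<le> K * A" "(\<Sum>j\<in>F. (b j)\<^sup>2) \<le> K * B"
  shows "(\<Sum>j\<in>F. a j * b j) \<le> K * (sqrt A * sqrt B)"
proof -
  have "(\<Sum>j\<in>F. a j * b j) = (\<Sum>j\<in>F. \<bar>a j\<bar> * \<bar>b j\<bar>)"
    using assms(1,2) by (intro sum.cong) auto
  also have "\<dots> \<le> L2_set a F * L2_set b F" by (rule L2_set_mult_ineq)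
  also have "\<dots> \<le> sqrt (K * A) * sqrt (K * B)"
  proof -
    have "0 \<le> K * A" using assms(4) sum_nonneg[of F "\<lambda>j. (a j)\<^sup>2"] by simp
    thus ?thesis
      unfolding L2_set_def using assms(4,5) by (intro mult_mono real_sqrt_le_mono) (auto intro: sum_nonneg)
  qed
  also have "\<dots> = K * (sqrt A * sqrt B)"
    using assms(3) by (simp add: real_sqrt_mult mult_ac)
  finally show ?thesis .
qed

lemma cINF_le_mult_cINF:
  fixes f g :: "'a \<Rightarrow> real"
  assumes "A \<noteq> {}" "\<And>a. a \<in> A \<Longrightarrow> 0 \<le> f a" "\<And>a. a \<in> A \<Longrightarrow> f a \<le> c * g a" "0 < c"
  shows "Inf (f ` A) \<le> c * Inf (g ` A)"
proof -
  have bdd: "bdd_below (f ` A)" using assms(2) by (rule bdd_belowI2)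
  have "Inf (f ` A) \<le> c * g a" if "a \<in> A" for a
    using order_trans[OF cINF_lower[OF bdd that] assms(3)[OF that]] .
  hence "Inf (f ` A) / c \<le> g a" if "a \<in> A" for a
    using that assms(4) by (simp add: pos_divide_le_eq mult.commute)
  hence "Inf (f ` A) / c \<le> Inf (g ` A)" by (intro cINF_greatest assms(1))
  thus ?thesis using assms(4) by (simp add: pos_divide_le_eq mult.commute)
qed

text \<open>The hypothesis for c = 0 is needed because \<infinity> * 0 = 0 in ereal.\<close>
lemma ereal_le_times_ereal:
  fixes B :: ereal and a c :: real
  assumes "0 \<le> B" "0 \<le> c"
    and finite: "\<And>b. B = ereal b \<Longrightarrow> a \<le> b * c" and zero: "c = 0 \<Longrightarrow> a \<le> 0"
  shows "ereal a \<le> B * ereal c"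
proof (cases B)
  case (real b)
  thus ?thesis using finite by simp
next
  case PInf
  show ?thesis
  proof (cases "c = 0")
    case True
    thus ?thesis using zero PInf by (simp add: zero_ereal_def)
  next
    case False
    thus ?thesis using PInf \<open>0 \<le> c\<close> by simp
  qed
qed (use assms(1) in simp)

lemma setcompr_eq_image_prod3: "{f m x y | m x y. (m, x, y) \<in> R} = (\<lambda>(m, x, y). f m x y) ` R"
proof (intro set_eqI iffI)
  fix v assume "v \<in> {f m x y | m x y. (m, x, y) \<in> R}"
  then obtain m x y where "v = f m x y" "(m, x, y) \<in> R" by blast
  thus "v \<in> (\<lambda>(m, x, y). f m x y) ` R" by (simp add: rev_image_eqI)
next
  fix v assume "v \<in> (\<lambda>(m, x, y). f m x y) ` R"
  then obtain m x y where "v = f m x y" "(m, x, y) \<in> R" by auto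
  thus "v \<in> {f m x y | m x y. (m, x, y) \<in> R}" by blast
qed

subsection \<open>Rapidly decreasing matrices\<close>

lemma S_space_bound:
  assumes "x \<in> S_space"
  shows "\<exists>C. \<forall>i j. cmod (x i j) * real (Suc i) ^ a * real (Suc j) ^ b \<le> C"
proof -
  obtain C where C: "\<forall>i j. cmod (x i j) * real (Suc i) ^ max a b * real (Suc j) ^ max a b \<le> C"
    using assms unfolding S_space_def by blast
  have "cmod (x i j) * real (Suc i) ^ a * real (Suc j) ^ b
      \<le> cmod (x i j) * real (Suc i) ^ max a b * real (Suc j) ^ max a b" for i j
    by (intro mult_mono power_increasing) auto
  with C show ?thesis by (meson order_trans)
qed

lemma S_spaceI:
  assumes "\<And>n. \<exists>C. \<forall>i j. cmod (x i j) * real (Suc i) ^ n * real (Suc j) ^ n \<le> C"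
  shows "x \<in> S_space"
  using assms unfolding S_space_def by blast

lemma S_space_zero: "0 \<in> S_space"
  by (rule S_spaceI) auto

lemma S_space_scale:
  assumes "x \<in> S_space"
  shows "(\<lambda>i j. c * x i j) \<in> S_space"
proof (rule S_spaceI)
  fix n
  obtain C where C: "\<forall>i j. cmod (x i j) * real (Suc i) ^ n * real (Suc j) ^ n \<le> C"
    using S_space_bound[OF assms] by blast
  have "cmod (c * x i j) * real (Suc i) ^ n * real (Suc j) ^ n \<le> cmod c * C" for i j
    using mult_left_mono[OF C[rule_format, of i j], of "cmod c"]
    by (simp add: norm_mult mult.assoc)
  thus "\<exists>C. \<forall>i j. cmod (c * x i j) * real (Suc i) ^ n * real (Suc j) ^ n \<le> C" by blast
qed

lemma S_space_add:
  assumes "x \<in> S_space" "y \<in> S_space"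
  shows "x + y \<in> S_space"
proof (rule S_spaceI)
  fix n
  obtain C D where
    C: "\<forall>i j. cmod (x i j) * real (Suc i) ^ n * real (Suc j) ^ n \<le> C" and
    D: "\<forall>i j. cmod (y i j) * real (Suc i) ^ n * real (Suc j) ^ n \<le> D"
    using S_space_bound[OF assms(1)] S_space_bound[OF assms(2)] by blast
  have "cmod ((x + y) i j) * real (Suc i) ^ n * real (Suc j) ^ n \<le> C + D" for i j
  proof -
    have "cmod ((x + y) i j) * real (Suc i) ^ n * real (Suc j) ^ n
        \<le> (cmod (x i j) + cmod (y i j)) * real (Suc i) ^ n * real (Suc j) ^ n"
      by (intro mult_right_mono) (auto simp: norm_triangle_ineq)
    also have "\<dots> = cmod (x i j) * real (Suc i) ^ n * real (Suc j) ^ n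
        + cmod (y i j) * real (Suc i) ^ n * real (Suc j) ^ n"
      by (simp only: distrib_right)
    finally show ?thesis using C[rule_format, of i j] D[rule_format, of i j] by linarith
  qed
  thus "\<exists>C. \<forall>i j. cmod ((x + y) i j) * real (Suc i) ^ n * real (Suc j) ^ n \<le> C" by blast
qed

lemma S_space_sum: "(\<And>j. j \<in> F \<Longrightarrow> x j \<in> S_space) \<Longrightarrow> (\<Sum>j\<in>F. x j) \<in> S_space"
  by (induction F rule: infinite_finite_induct) (auto intro: S_space_zero S_space_add)

lemma S_space_madj: "x \<in> S_space \<Longrightarrow> madj x \<in> S_space"
proof (rule S_spaceI)
  fix n assume "x \<in> S_space"
  then obtain C where C: "\<forall>i j. cmod (x i j) * real (Suc i) ^ n * real (Suc j) ^ n \<le> C"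
    using S_space_bound by blast
  have "cmod (madj x i j) * real (Suc i) ^ n * real (Suc j) ^ n \<le> C" for i j
    using C[rule_format, of j i] by (simp add: madj_def mult_ac)
  thus "\<exists>C. \<forall>i j. cmod (madj x i j) * real (Suc i) ^ n * real (Suc j) ^ n \<le> C" by blast
qed

lemma mmult_entry_bound:
  assumes "x \<in> S_space" "y \<in> S_space"
  shows "\<exists>C. \<forall>i k. cmod (mmult x y i k) * real (Suc i) ^ n * real (Suc k) ^ n \<le> C"
proof -
  obtain C1 where C1: "\<forall>i j. cmod (x i j) * real (Suc i) ^ n * real (Suc j) ^ 2 \<le> C1"
    using S_space_bound[OF assms(1)] by blast
  obtain C2 where C2: "\<forall>j k. cmod (y j k) * real (Suc j) ^ 0 * real (Suc k) ^ n \<le> C2"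
    using S_space_bound[OF assms(2)] by blast
  have "0 \<le> C2"
    using order_trans[OF _ C2[rule_format, of 0 0]] by simp
  define w where "w i k = real (Suc i) ^ n * real (Suc k) ^ n" for i k
  have w_pos: "0 < w i k" for i k by (simp add: w_def)
  have term_le: "norm (x i j * y j k) \<le> C1 * C2 / w i k * (1 / (real (Suc j))\<^sup>2)" for i j k
  proof -
    have "norm (x i j * y j k) * (w i k * (real (Suc j))\<^sup>2)
        = (cmod (x i j) * real (Suc i) ^ n * real (Suc j) ^ 2) * (cmod (y j k) * real (Suc k) ^ n)"
      by (simp add: norm_mult w_def mult_ac)
    also have "\<dots> \<le> C1 * C2"
      using C1 C2 \<open>0 \<le> C2\<close> by (intro mult_mono) (auto intro: order_trans[OF _ C1[rule_format]])
    finally show ?thesis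
      using w_pos[of i k] by (simp add: field_simps)
  qed
  have summable_bound: "summable (\<lambda>j. C1 * C2 / w i k * (1 / (real (Suc j))\<^sup>2))" for i k
    by (intro summable_mult summable_inverse_squares)
  have "cmod (mmult x y i k) * real (Suc i) ^ n * real (Suc k) ^ n \<le> C1 * C2 * (pi\<^sup>2 / 6)" for i k
  proof -
    have "cmod (mmult x y i k) \<le> (\<Sum>j. C1 * C2 / w i k * (1 / (real (Suc j))\<^sup>2))"
      unfolding mmult_def by (rule norm_suminf_le[OF term_le summable_bound])
    also have "\<dots> = C1 * C2 / w i k * (pi\<^sup>2 / 6)"
      by (subst suminf_mult[OF summable_inverse_squares]) (simp only: suminf_inverse_squares)
    finally have "cmod (mmult x y i k) * w i k \<le> C1 * C2 * (pi\<^sup>2 / 6)"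
      using w_pos[of i k] by (simp add: field_simps)
    thus ?thesis by (simp add: w_def mult.assoc)
  qed
  thus ?thesis by blast
qed

lemma S_space_mmult: "x \<in> S_space \<Longrightarrow> y \<in> S_space \<Longrightarrow> mmult x y \<in> S_space"
  by (rule S_spaceI) (use mmult_entry_bound in blast)

lemma S_space_msq: "x \<in> S_space \<Longrightarrow> msq x \<in> S_space"
proof -
  assume x: "x \<in> S_space"
  have "msq x = (\<lambda>i j. (1/2) * (mmult (madj x) x + mmult x (madj x)) i j)"
    by (simp add: msq_def)
  thus ?thesis using x by (metis S_space_scale S_space_add S_space_mmult S_space_madj)
qed

subsection \<open>Upper and lower bounds for the norms \<open>Snorm n\<close>\<close>

text \<open>Truncation to [0,I)^2 of \<Sum>_{i,l} |x_{il}|^2 i^{2n} l^{2n}, the square of a weighted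
  Hilbert-Schmidt norm of x (indices shifted as in the definitions).\<close>
definition hs_trunc :: "nat \<Rightarrow> mat \<Rightarrow> nat \<Rightarrow> real" where
  "hs_trunc n x I = (\<Sum>i<I. \<Sum>l<I. (cmod (x i l))\<^sup>2 * real (Suc i) ^ (2*n) * real (Suc l) ^ (2*n))"

lemma sum_sum_lessThan_mono:
  fixes f :: "nat \<Rightarrow> nat \<Rightarrow> real"
  assumes "\<And>i j. 0 \<le> f i j" "I \<le> M" "J \<le> M"
  shows "(\<Sum>i<I. \<Sum>j<J. f i j) \<le> (\<Sum>i<M. \<Sum>j<M. f i j)"
proof -
  have "(\<Sum>i<I. \<Sum>j<J. f i j) \<le> (\<Sum>i<I. \<Sum>j<M. f i j)"
    by (intro sum_mono sum_mono2) (use assms in auto)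
  also have "\<dots> \<le> (\<Sum>i<M. \<Sum>j<M. f i j)"
    by (intro sum_mono2) (use assms in \<open>auto intro: sum_nonneg\<close>)
  finally show ?thesis .
qed

lemma hs_trunc_nonneg: "0 \<le> hs_trunc n x I"
  unfolding hs_trunc_def by (intro sum_nonneg) auto

lemma incseq_hs_trunc: "incseq (hs_trunc n x)"
  unfolding incseq_def hs_trunc_def by (auto intro: sum_sum_lessThan_mono)

lemma hs_trunc_bounded:
  assumes "x \<in> S_space"
  shows "\<exists>U. \<forall>I. hs_trunc n x I \<le> U"
proof -
  obtain C where C: "\<forall>i l. cmod (x i l) * real (Suc i) ^ (n+1) * real (Suc l) ^ (n+1) \<le> C"
    using S_space_bound[OF assms] by blast
  have term_le: "(cmod (x i l))\<^sup>2 * real (Suc i) ^ (2*n) * real (Suc l) ^ (2*n)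
      \<le> C\<^sup>2 * ((1 / (real (Suc i))\<^sup>2) * (1 / (real (Suc l))\<^sup>2))" for i l
  proof -
    let ?t = "cmod (x i l) * real (Suc i) ^ n * real (Suc l) ^ n"
    have "\<bar>?t\<bar> * (real (Suc i) * real (Suc l)) \<le> C"
      using C[rule_format, of i l] by (simp add: mult_ac)
    hence "?t\<^sup>2 \<le> C\<^sup>2 * (1 / (real (Suc i) * real (Suc l))\<^sup>2)"
      by (intro square_le_of_decay) auto
    thus ?thesis
      by (simp add: power_mult_distrib power_mult[symmetric] power_divide mult_ac)
  qed
  have "hs_trunc n x I \<le> C\<^sup>2 * ((pi\<^sup>2 / 6) * (pi\<^sup>2 / 6))" for I
  proof -
    have "hs_trunc n x I \<le> (\<Sum>i<I. \<Sum>l<I. C\<^sup>2 * ((1 / (real (Suc i))\<^sup>2) * (1 / (real (Suc l))\<^sup>2)))"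
      unfolding hs_trunc_def by (intro sum_mono term_le)
    also have "\<dots> = C\<^sup>2 * (\<Sum>i<I. \<Sum>l<I. (1 / (real (Suc i))\<^sup>2) * (1 / (real (Suc l))\<^sup>2))"
      by (simp only: sum_distrib_left)
    also have "\<dots> = C\<^sup>2 * ((\<Sum>i<I. 1 / (real (Suc i))\<^sup>2) * (\<Sum>l<I. 1 / (real (Suc l))\<^sup>2))"
      by (simp only: sum_product)
    also have "\<dots> \<le> C\<^sup>2 * ((pi\<^sup>2 / 6) * (pi\<^sup>2 / 6))"
      by (intro mult_left_mono mult_mono sum_inverse_squares_le) (auto intro: sum_nonneg)
    finally show ?thesis .
  qed
  thus ?thesis by blast
qed

lemma summable_act_row:
  assumes "x \<in> S_space" "summable (sd_sum n \<xi>)"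
  shows "summable (\<lambda>j. x i j * \<xi> j)"
proof -
  obtain C where C: "\<forall>i j. cmod (x i j) * real (Suc i) ^ 0 * real (Suc j) ^ (n+1) \<le> C"
    using S_space_bound[OF assms(1)] by blast
  have "norm (x i j * \<xi> j) \<le> C\<^sup>2 * (1 / (real (Suc j))\<^sup>2) + sd_sum n \<xi> j" for j
  proof -
    define p where "p = cmod (x i j) * real (Suc j) ^ n"
    define q where "q = cmod (\<xi> j) / real (Suc j) ^ n"
    have "norm (x i j * \<xi> j) = p * q" by (simp add: p_def q_def norm_mult)
    also have "\<dots> \<le> p\<^sup>2 + q\<^sup>2"
    proof -
      have "0 \<le> p * q" by (simp add: p_def q_def)
      thus ?thesis using sum_squares_bound[of p q] by linarith
    qed
    also have "p\<^sup>2 \<le> C\<^sup>2 * (1 / (real (Suc j))\<^sup>2)"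
      by (rule square_le_of_decay) (use C[rule_format, of i j] in \<open>auto simp: p_def mult_ac\<close>)
    also have "q\<^sup>2 = sd_sum n \<xi> j"
      by (simp add: q_def sd_sum_def power_divide power_mult[symmetric] mult.commute)
    finally show ?thesis by simp
  qed
  thus ?thesis
    by (intro summable_comparison_test'[OF summable_add[OF
          summable_mult[OF summable_inverse_squares] assms(2)]]) auto
qed

lemma sum_sd_sum_le_1:
  assumes "summable (sd_sum n \<xi>)" "sdnorm n \<xi> \<le> 1"
  shows "(\<Sum>j<J. sd_sum n \<xi> j) \<le> 1"
proof -
  have nonneg: "0 \<le> sd_sum n \<xi> j" for j by (simp add: sd_sum_def)
  have "(\<Sum>j<J. sd_sum n \<xi> j) \<le> suminf (sd_sum n \<xi>)"
    by (rule sum_le_suminf[OF assms(1)]) (auto simp: nonneg)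
  moreover have "suminf (sd_sum n \<xi>) \<le> 1"
    using assms(2) suminf_nonneg[OF assms(1) nonneg] by (simp add: sdnorm_def)
  ultimately show ?thesis by linarith
qed

lemma norm_partial_act_sq_le:
  assumes "summable (sd_sum n \<xi>)" "sdnorm n \<xi> \<le> 1"
  shows "(cmod (\<Sum>j<J. x i j * \<xi> j))\<^sup>2 \<le> (\<Sum>j<J. (cmod (x i j))\<^sup>2 * real (Suc j) ^ (2*n))"
proof -
  define p where "p j = cmod (x i j) * real (Suc j) ^ n" for j
  define q where "q j = cmod (\<xi> j) / real (Suc j) ^ n" for j
  have "cmod (\<Sum>j<J. x i j * \<xi> j) \<le> (\<Sum>j<J. p j * q j)"
    using norm_sum[of "\<lambda>j. x i j * \<xi> j"] by (simp add: p_def q_def norm_mult)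
  hence "(cmod (\<Sum>j<J. x i j * \<xi> j))\<^sup>2 \<le> (\<Sum>j<J. p j * q j)\<^sup>2"
    by (intro power_mono) auto
  also have "\<dots> \<le> (\<Sum>j<J. (p j)\<^sup>2) * (\<Sum>j<J. (q j)\<^sup>2)"
    by (rule Cauchy_Schwarz_ineq_sum)
  also have "(\<Sum>j<J. (q j)\<^sup>2) = (\<Sum>j<J. sd_sum n \<xi> j)"
    by (simp add: q_def sd_sum_def power_divide power_mult[symmetric] mult.commute)
  also have "(\<Sum>j<J. (p j)\<^sup>2) = (\<Sum>j<J. (cmod (x i j))\<^sup>2 * real (Suc j) ^ (2*n))"
    by (simp add: p_def power_mult_distrib power_mult[symmetric] mult.commute)
  also have "\<dots> * (\<Sum>j<J. sd_sum n \<xi> j) \<le> \<dots> * 1"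
    by (intro mult_left_mono sum_sd_sum_le_1[OF assms] sum_nonneg) auto
  finally show ?thesis by simp
qed

lemma s_sum_act_le:
  assumes x: "x \<in> S_space" and \<xi>: "summable (sd_sum n \<xi>)" "sdnorm n \<xi> \<le> 1"
    and U: "\<And>I. hs_trunc n x I \<le> U"
  shows "summable (s_sum n (act x \<xi>))" "suminf (s_sum n (act x \<xi>)) \<le> U"
proof -
  have partial_le: "(\<Sum>i<I. (cmod (\<Sum>j<J. x i j * \<xi> j))\<^sup>2 * real (Suc i) ^ (2*n)) \<le> U" for I J
  proof -
    have "(\<Sum>i<I. (cmod (\<Sum>j<J. x i j * \<xi> j))\<^sup>2 * real (Suc i) ^ (2*n))
        \<le> (\<Sum>i<I. (\<Sum>j<J. (cmod (x i j))\<^sup>2 * real (Suc j) ^ (2*n)) * real (Suc i) ^ (2*n))"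
      by (intro sum_mono mult_right_mono norm_partial_act_sq_le[OF \<xi>]) auto
    also have "\<dots> = (\<Sum>i<I. \<Sum>j<J. (cmod (x i j))\<^sup>2 * real (Suc i) ^ (2*n) * real (Suc j) ^ (2*n))"
      unfolding sum_distrib_right by (intro sum.cong refl) (simp add: mult_ac)
    also have "\<dots> \<le> hs_trunc n x (max I J)"
      unfolding hs_trunc_def by (rule sum_sum_lessThan_mono) auto
    finally show ?thesis using U by (rule order_trans)
  qed
  have "(\<lambda>J. \<Sum>i<I. (cmod (\<Sum>j<J. x i j * \<xi> j))\<^sup>2 * real (Suc i) ^ (2*n))
      \<longlonglongrightarrow> (\<Sum>i<I. s_sum n (act x \<xi>) i)" for I
    unfolding s_sum_def act_def
    by (intro tendsto_intros summable_LIMSEQ summable_act_row[OF x \<xi>(1)])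
  hence partial_s_sum_le: "(\<Sum>i<I. s_sum n (act x \<xi>) i) \<le> U" for I
    by (rule LIMSEQ_le_const2) (use partial_le in auto)
  have nonneg: "0 \<le> s_sum n (act x \<xi>) i" for i by (simp add: s_sum_def)
  show summable: "summable (s_sum n (act x \<xi>))"
    by (rule summableI_nonneg_bounded[OF nonneg partial_s_sum_le])
  show "suminf (s_sum n (act x \<xi>)) \<le> U"
    by (rule suminf_le_const[OF summable partial_s_sum_le])
qed

lemma Snorm_leI:
  assumes "\<And>\<xi>. \<xi> \<in> s_dual \<Longrightarrow> summable (sd_sum n \<xi>) \<Longrightarrow> sdnorm n \<xi> \<le> 1
             \<Longrightarrow> snorm n (act x \<xi>) \<le> B"
  shows "Snorm n x \<le> B"
proof -
  have "sd_sum k (\<lambda>_. 0) = (\<lambda>_. 0)" for k by (simp add: sd_sum_def fun_eq_iff)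
  hence "(\<lambda>_. 0) \<in> s_dual \<and> summable (sd_sum n (\<lambda>_. 0)) \<and> sdnorm n (\<lambda>_. 0) \<le> 1"
    by (auto simp: s_dual_def sdnorm_def)
  thus ?thesis
    unfolding Snorm_def by (intro cSup_least) (use assms in auto)
qed

lemma Snorm_le_sqrt_hs:
  assumes "x \<in> S_space" "\<And>I. hs_trunc n x I \<le> U"
  shows "Snorm n x \<le> sqrt U"
  by (rule Snorm_leI) (use s_sum_act_le(2)[OF assms(1) _ _ assms(2)] in \<open>simp add: snorm_def\<close>)

lemma snorm_act_le_Snorm:
  assumes x: "x \<in> S_space" and "\<xi> \<in> s_dual" "summable (sd_sum n \<xi>)" "sdnorm n \<xi> \<le> 1"
  shows "snorm n (act x \<xi>) \<le> Snorm n x"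
proof -
  obtain U where U: "\<And>I. hs_trunc n x I \<le> U" using hs_trunc_bounded[OF x] by blast
  have "bdd_above {snorm n (act x \<xi>) | \<xi>. \<xi> \<in> s_dual \<and> summable (sd_sum n \<xi>) \<and> sdnorm n \<xi> \<le> 1}"
    by (rule bdd_aboveI[where M="sqrt U"])
       (use s_sum_act_le(2)[OF x _ _ U] in \<open>auto simp: snorm_def\<close>)
  thus ?thesis
    unfolding Snorm_def by (rule cSup_upper[rotated]) (use assms in blast)
qed

lemma act_single: "act x (\<lambda>j. if j = l then c else 0) = (\<lambda>i. x i l * c)"
proof
  fix i
  have "(\<lambda>j. x i j * (if j = l then c else 0)) = (\<lambda>j. if j = l then x i l * c else 0)"
    by (auto simp: fun_eq_iff)
  thus "act x (\<lambda>j. if j = l then c else 0) i = x i l * c"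
    unfolding act_def using sums_unique[OF sums_single[of l "\<lambda>_. x i l * c"]] by simp
qed

text \<open>Test against the l-th unit vector, scaled to have dual norm 1.\<close>
lemma entry_le_Snorm:
  assumes x: "x \<in> S_space"
  shows "cmod (x i l) * real (Suc i) ^ n * real (Suc l) ^ n \<le> Snorm n x"
proof -
  define r where "r = real (Suc l) ^ n"
  have "0 \<le> r" by (simp add: r_def)
  define \<xi> where "\<xi> = (\<lambda>j. if j = l then complex_of_real r else 0)"
  have sd_sum_\<xi>: "sd_sum k \<xi> = (\<lambda>j. if j = l then r\<^sup>2 / real (Suc l) ^ (2*k) else 0)" for k
    by (auto simp: sd_sum_def \<xi>_def fun_eq_iff)
  have r2: "r\<^sup>2 = real (Suc l) ^ (2*n)"
    by (simp add: r_def power_mult[symmetric] mult.commute)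
  hence "sd_sum n \<xi> = (\<lambda>j. if j = l then 1 else 0)"
    unfolding sd_sum_\<xi> by (simp add: fun_eq_iff)
  hence "sd_sum n \<xi> sums 1"
    using sums_single[of l "\<lambda>_. 1::real"] by simp
  hence \<xi>: "summable (sd_sum n \<xi>)" "sdnorm n \<xi> \<le> 1"
    by (auto simp: sums_iff sdnorm_def)
  have "summable (sd_sum 1 \<xi>)"
    unfolding sd_sum_\<xi> by (rule summable_single)
  hence "\<xi> \<in> s_dual" unfolding s_dual_def by auto
  obtain U where U: "\<And>I. hs_trunc n x I \<le> U" using hs_trunc_bounded[OF x] by blast
  have "s_sum n (act x \<xi>) i \<le> suminf (s_sum n (act x \<xi>))"
    using sum_le_suminf[OF s_sum_act_le(1)[OF x \<xi> U], of "{i}"] by (simp add: s_sum_def)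
  hence "sqrt (s_sum n (act x \<xi>) i) \<le> snorm n (act x \<xi>)"
    unfolding snorm_def by simp
  also have "\<dots> \<le> Snorm n x" by (rule snorm_act_le_Snorm[OF x \<open>\<xi> \<in> s_dual\<close> \<xi>])
  also have "s_sum n (act x \<xi>) i = (cmod (x i l))\<^sup>2 * r\<^sup>2 * real (Suc i) ^ (2*n)"
    using \<open>0 \<le> r\<close> by (simp add: \<xi>_def act_single s_sum_def norm_mult power_mult_distrib)
  also have "\<dots> = (cmod (x i l) * real (Suc i) ^ n * real (Suc l) ^ n)\<^sup>2"
    unfolding r2 by (simp add: power_mult_distrib power_mult[symmetric] mult_ac)
  finally show ?thesis by simp
qed

lemma Snorm_nonneg: "x \<in> S_space \<Longrightarrow> 0 \<le> Snorm n x"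
  using entry_le_Snorm[of x 0 0 n] by (smt (verit) mult_nonneg_nonneg norm_ge_zero zero_le_power of_nat_0_le_iff)

lemma Snorm_le_0_imp_zero:
  assumes "x \<in> S_space" "Snorm n x \<le> 0"
  shows "x = 0"
proof (intro ext)
  fix i l
  have "cmod (x i l) * (real (Suc i) ^ n * real (Suc l) ^ n) \<le> 0"
    using entry_le_Snorm[OF assms(1), of i l n] assms(2) by (simp add: mult.assoc)
  moreover have "0 < real (Suc i) ^ n * real (Suc l) ^ n" by simp
  ultimately have "cmod (x i l) \<le> 0"
    using mult_le_cancel_right_pos[of "real (Suc i) ^ n * real (Suc l) ^ n" "cmod (x i l)" 0] by simp
  thus "x i l = 0 i l" by simp
qed

lemma Snorm_zero: "Snorm n 0 = 0"
proof -
  have "Snorm n 0 \<le> sqrt 0"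
    by (rule Snorm_le_sqrt_hs[OF S_space_zero]) (simp add: hs_trunc_def)
  thus ?thesis using Snorm_nonneg[OF S_space_zero, of n] by simp
qed

lemma Snorm_scale_le:
  assumes x: "x \<in> S_space"
  shows "Snorm n (\<lambda>i j. c * x i j) \<le> cmod c * Snorm n x"
proof (rule Snorm_leI)
  fix \<xi> assume \<xi>: "\<xi> \<in> s_dual" "summable (sd_sum n \<xi>)" "sdnorm n \<xi> \<le> 1"
  have act: "act (\<lambda>i j. c * x i j) \<xi> = (\<lambda>i. c * act x \<xi> i)"
    unfolding act_def using suminf_mult[OF summable_act_row[OF x \<xi>(2)], of c]
    by (simp add: mult.assoc)
  obtain U where "\<And>I. hs_trunc n x I \<le> U" using hs_trunc_bounded[OF x] by blast
  hence summable: "summable (s_sum n (act x \<xi>))" using s_sum_act_le(1)[OF x \<xi>(2,3)] by blast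
  have "s_sum n (\<lambda>i. c * act x \<xi> i) = (\<lambda>i. (cmod c)\<^sup>2 * s_sum n (act x \<xi>) i)"
    by (simp add: s_sum_def fun_eq_iff norm_mult power_mult_distrib mult_ac)
  hence "snorm n (act (\<lambda>i j. c * x i j) \<xi>) = cmod c * snorm n (act x \<xi>)"
    unfolding act snorm_def by (simp add: suminf_mult[OF summable] real_sqrt_mult)
  also have "\<dots> \<le> cmod c * Snorm n x"
    by (intro mult_left_mono snorm_act_le_Snorm[OF x \<xi>]) auto
  finally show "snorm n (act (\<lambda>i j. c * x i j) \<xi>) \<le> cmod c * Snorm n x" .
qed

subsection \<open>Control by the diagonal of \<open>\<Sum>\<^sub>j |x\<^sub>j|\<^sup>2\<close>\<close>

definition colsq :: "mat \<Rightarrow> nat \<Rightarrow> real" where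
  "colsq x l = (\<Sum>i. (cmod (x i l))\<^sup>2)"

definition rowsq :: "mat \<Rightarrow> nat \<Rightarrow> real" where
  "rowsq x l = (\<Sum>k. (cmod (x l k))\<^sup>2)"

lemma summable_colsq:
  assumes "x \<in> S_space"
  shows "summable (\<lambda>i. (cmod (x i l))\<^sup>2)"
proof -
  obtain C where "\<forall>i l. cmod (x i l) * real (Suc i) ^ 1 * real (Suc l) ^ 0 \<le> C"
    using S_space_bound[OF assms] by blast
  thus ?thesis by (intro summable_square_of_decay[of _ C]) auto
qed

lemma summable_rowsq:
  assumes "x \<in> S_space"
  shows "summable (\<lambda>k. (cmod (x l k))\<^sup>2)"
proof -
  obtain C where "\<forall>l k. cmod (x l k) * real (Suc l) ^ 0 * real (Suc k) ^ 1 \<le> C"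
    using S_space_bound[OF assms] by blast
  thus ?thesis by (intro summable_square_of_decay[of _ C]) auto
qed

lemma colsq_nonneg: "x \<in> S_space \<Longrightarrow> 0 \<le> colsq x l"
  unfolding colsq_def by (rule suminf_nonneg[OF summable_colsq]) auto

lemma rowsq_nonneg: "x \<in> S_space \<Longrightarrow> 0 \<le> rowsq x l"
  unfolding rowsq_def by (rule suminf_nonneg[OF summable_rowsq]) auto

lemma mmult_madj_left_diag:
  assumes "x \<in> S_space"
  shows "mmult (madj x) x l l = complex_of_real (colsq x l)"
proof -
  have "mmult (madj x) x l l = (\<Sum>i. complex_of_real ((cmod (x i l))\<^sup>2))"
    unfolding mmult_def madj_def complex_norm_square by (simp add: mult.commute)
  also have "\<dots> = complex_of_real (colsq x l)"
    unfolding colsq_def by (rule suminf_of_real[OF summable_colsq[OF assms], symmetric])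
  finally show ?thesis .
qed

lemma mmult_madj_right_diag:
  assumes "x \<in> S_space"
  shows "mmult x (madj x) l l = complex_of_real (rowsq x l)"
proof -
  have "mmult x (madj x) l l = (\<Sum>k. complex_of_real ((cmod (x l k))\<^sup>2))"
    unfolding mmult_def madj_def complex_norm_square by simp
  also have "\<dots> = complex_of_real (rowsq x l)"
    unfolding rowsq_def by (rule suminf_of_real[OF summable_rowsq[OF assms], symmetric])
  finally show ?thesis .
qed

lemma msq_diag:
  assumes "x \<in> S_space"
  shows "msq x l l = complex_of_real ((colsq x l + rowsq x l) / 2)"
  using assms by (simp add: msq_def mmult_madj_left_diag mmult_madj_right_diag)

lemma sum_diag_le_Snorm:
  assumes "\<And>j. j \<in> F \<Longrightarrow> y j \<in> S_space"
    and "\<And>j. j \<in> F \<Longrightarrow> y j l l = complex_of_real (d j)" "\<And>j. j \<in> F \<Longrightarrow> 0 \<le> d j"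
  shows "(\<Sum>j\<in>F. d j) * real (Suc l) ^ (2*N) \<le> Snorm N (\<Sum>j\<in>F. y j)"
proof -
  have "(\<Sum>j\<in>F. y j) \<in> S_space" using assms(1) by (rule S_space_sum)
  from entry_le_Snorm[OF this, where i=l and l=l and n=N]
  have "cmod ((\<Sum>j\<in>F. y j) l l) * real (Suc l) ^ (2*N) \<le> Snorm N (\<Sum>j\<in>F. y j)"
    by (metis mult.assoc mult_2 power_add)
  moreover have "(\<Sum>j\<in>F. y j) l l = complex_of_real (\<Sum>j\<in>F. d j)"
    using assms(2) by (simp add: sum_apply)
  moreover have "0 \<le> (\<Sum>j\<in>F. d j)" using assms(3) by (rule sum_nonneg)
  ultimately show ?thesis by (simp del: of_real_sum)
qed

lemma hs_trunc_le_diag: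
  assumes x: "x \<in> S_space"
  shows "hs_trunc n x I \<le> (\<Sum>l<I. real (Suc l) ^ (4*n) * ((colsq x l + rowsq x l) / 2))"
proof -
  define W where "W l = real (Suc l) ^ (2*n)" for l
  define c where "c i l = (cmod (x i l))\<^sup>2" for i l
  have c_nonneg: "0 \<le> c i l" for i l by (simp add: c_def)
  have "hs_trunc n x I = (\<Sum>i<I. \<Sum>l<I. c i l * (W i * W l))"
    by (simp add: hs_trunc_def c_def W_def mult.assoc)
  also have "\<dots> \<le> (\<Sum>i<I. \<Sum>l<I. c i l * ((W i)\<^sup>2 / 2) + c i l * ((W l)\<^sup>2 / 2))"
  proof (intro sum_mono)
    fix i l
    have "c i l * (W i * W l) \<le> c i l * ((W i)\<^sup>2 / 2 + (W l)\<^sup>2 / 2)"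
      using sum_squares_bound[of "W i" "W l"] c_nonneg[of i l] by (intro mult_left_mono) simp_all
    thus "c i l * (W i * W l) \<le> c i l * ((W i)\<^sup>2 / 2) + c i l * ((W l)\<^sup>2 / 2)"
      by (simp only: distrib_left)
  qed
  also have "\<dots> = (\<Sum>i<I. \<Sum>l<I. c i l * ((W i)\<^sup>2 / 2)) + (\<Sum>i<I. \<Sum>l<I. c i l * ((W l)\<^sup>2 / 2))"
    by (simp only: sum.distrib)
  also have "(\<Sum>i<I. \<Sum>l<I. c i l * ((W i)\<^sup>2 / 2)) = (\<Sum>i<I. (\<Sum>l<I. c i l) * ((W i)\<^sup>2 / 2))"
    by (simp only: sum_distrib_right)
  also have "(\<Sum>i<I. \<Sum>l<I. c i l * ((W l)\<^sup>2 / 2)) = (\<Sum>l<I. (\<Sum>i<I. c i l) * ((W l)\<^sup>2 / 2))"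
    by (subst sum.swap) (simp only: sum_distrib_right)
  also have "(\<Sum>i<I. (\<Sum>l<I. c i l) * ((W i)\<^sup>2 / 2)) + (\<Sum>l<I. (\<Sum>i<I. c i l) * ((W l)\<^sup>2 / 2))
      \<le> (\<Sum>i<I. rowsq x i * ((W i)\<^sup>2 / 2)) + (\<Sum>l<I. colsq x l * ((W l)\<^sup>2 / 2))"
    unfolding c_def colsq_def rowsq_def
    by (intro add_mono sum_mono mult_right_mono sum_le_suminf summable_colsq summable_rowsq x) auto
  also have "\<dots> = (\<Sum>l<I. real (Suc l) ^ (4*n) * ((colsq x l + rowsq x l) / 2))"
  proof -
    have "(W l)\<^sup>2 = real (Suc l) ^ (4*n)" for l
      by (simp add: W_def flip: power_mult)
    thus ?thesis
      by (simp add: sum.distrib[symmetric] field_simps)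
  qed
  finally show ?thesis .
qed

lemma sum_hs_trunc_le:
  assumes "\<And>j. j \<in> F \<Longrightarrow> x j \<in> S_space" "0 \<le> D"
    and diag: "\<And>l. (\<Sum>j\<in>F. (colsq (x j) l + rowsq (x j) l) / 2) * real (Suc l) ^ (4*n+2) \<le> D"
  shows "(\<Sum>j\<in>F. hs_trunc n (x j) I) \<le> pi\<^sup>2 / 6 * D"
proof -
  have weighted_le: "real (Suc l) ^ (4*n) * (\<Sum>j\<in>F. (colsq (x j) l + rowsq (x j) l) / 2)
      \<le> D * (1 / (real (Suc l))\<^sup>2)" for l
  proof -
    have "real (Suc l) ^ (4*n) * (\<Sum>j\<in>F. (colsq (x j) l + rowsq (x j) l) / 2) * (real (Suc l))\<^sup>2 \<le> D"
      using diag[of l] by (simp add: power_add power2_eq_square mult_ac)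
    thus ?thesis by (simp add: field_simps)
  qed
  have "(\<Sum>j\<in>F. hs_trunc n (x j) I)
      \<le> (\<Sum>j\<in>F. \<Sum>l<I. real (Suc l) ^ (4*n) * ((colsq (x j) l + rowsq (x j) l) / 2))"
    using assms(1) by (intro sum_mono hs_trunc_le_diag)
  also have "\<dots> = (\<Sum>l<I. real (Suc l) ^ (4*n) * (\<Sum>j\<in>F. (colsq (x j) l + rowsq (x j) l) / 2))"
    by (subst sum.swap) (simp only: sum_distrib_left)
  also have "\<dots> \<le> (\<Sum>l<I. D * (1 / (real (Suc l))\<^sup>2))"
    by (intro sum_mono weighted_le)
  also have "\<dots> \<le> D * (pi\<^sup>2 / 6)"
    unfolding sum_distrib_left[symmetric] by (intro mult_left_mono sum_inverse_squares_le assms(2))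
  finally show ?thesis by (simp only: mult.commute)
qed

lemma sum_Snorm_sq_le_diag:
  assumes fin: "finite F" and x: "\<And>j. j \<in> F \<Longrightarrow> x j \<in> S_space"
    and diag: "\<And>l. (\<Sum>j\<in>F. (colsq (x j) l + rowsq (x j) l) / 2) * real (Suc l) ^ (4*n+2) \<le> D"
  shows "(\<Sum>j\<in>F. (Snorm n (x j))\<^sup>2) \<le> pi\<^sup>2 / 6 * D"
proof -
  have "0 \<le> (\<Sum>j\<in>F. (colsq (x j) 0 + rowsq (x j) 0) / 2) * real (Suc 0) ^ (4*n+2)"
    using x by (auto intro!: sum_nonneg add_nonneg_nonneg colsq_nonneg rowsq_nonneg)
  hence "0 \<le> D" using diag[of 0] by linarith
  with x have sum_le: "(\<Sum>j\<in>F. hs_trunc n (x j) I) \<le> pi\<^sup>2 / 6 * D" for I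
    using diag by (rule sum_hs_trunc_le)
  define L where "L j = (SUP I. hs_trunc n (x j) I)" for j
  have bdd: "bdd_above (range (hs_trunc n (x j)))" if "j \<in> F" for j
  proof (rule bdd_aboveI2)
    fix I
    have "hs_trunc n (x j) I \<le> (\<Sum>j\<in>F. hs_trunc n (x j) I)"
      using fin that by (intro member_le_sum hs_trunc_nonneg)
    thus "hs_trunc n (x j) I \<le> pi\<^sup>2 / 6 * D" using sum_le[of I] by linarith
  qed
  have hs_lim: "hs_trunc n (x j) \<longlonglongrightarrow> L j" if "j \<in> F" for j
    unfolding L_def by (rule LIMSEQ_incseq_SUP[OF bdd[OF that] incseq_hs_trunc])
  have hs_le: "hs_trunc n (x j) I \<le> L j" if "j \<in> F" for j I
    unfolding L_def by (rule cSUP_upper[OF UNIV_I bdd[OF that]])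
  have "(\<Sum>j\<in>F. (Snorm n (x j))\<^sup>2) \<le> (\<Sum>j\<in>F. L j)"
  proof (rule sum_mono)
    fix j assume j: "j \<in> F"
    have "(Snorm n (x j))\<^sup>2 \<le> (sqrt (L j))\<^sup>2"
      by (rule power_mono[OF Snorm_le_sqrt_hs[OF x[OF j] hs_le[OF j]] Snorm_nonneg[OF x[OF j]]])
    also have "\<dots> = L j"
      using hs_le[OF j, of 0] hs_trunc_nonneg[of n "x j" 0] by simp
    finally show "(Snorm n (x j))\<^sup>2 \<le> L j" .
  qed
  also have "(\<Sum>j\<in>F. L j) \<le> pi\<^sup>2 / 6 * D"
  proof (rule LIMSEQ_le_const2)
    show "(\<lambda>I. \<Sum>j\<in>F. hs_trunc n (x j) I) \<longlonglongrightarrow> (\<Sum>j\<in>F. L j)"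
      by (rule tendsto_sum) (rule hs_lim)
  qed (use sum_le in auto)
  finally show ?thesis .
qed

lemma sum_Snorm_sq_le_msq:
  assumes "finite F" "\<And>j. j \<in> F \<Longrightarrow> x j \<in> S_space"
  shows "(\<Sum>j\<in>F. (Snorm n (x j))\<^sup>2) \<le> pi\<^sup>2 / 6 * Snorm (2*n+1) (\<Sum>j\<in>F. msq (x j))"
proof (rule sum_Snorm_sq_le_diag[OF assms])
  fix l
  show "(\<Sum>j\<in>F. (colsq (x j) l + rowsq (x j) l) / 2) * real (Suc l) ^ (4*n+2)
      \<le> Snorm (2*n+1) (\<Sum>j\<in>F. msq (x j))"
    using sum_diag_le_Snorm[of F "\<lambda>j. msq (x j)" l "\<lambda>j. (colsq (x j) l + rowsq (x j) l) / 2" "2*n+1"]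
    using assms(2) by (simp add: S_space_msq msq_diag colsq_nonneg rowsq_nonneg)
qed

lemma Snorm_le_rcnorm_sq:
  assumes "\<And>j. j \<in> {1..m} \<Longrightarrow> x j \<in> S_space"
  shows "Snorm k (\<Sum>j\<in>{1..m}. mmult (madj (x j)) (x j)) \<le> (rcnorm k m x)\<^sup>2"
    and "Snorm k (\<Sum>j\<in>{1..m}. mmult (x j) (madj (x j))) \<le> (rcnorm k m x)\<^sup>2"
proof -
  have max_sqrt: "a \<le> (max (sqrt a) (sqrt b))\<^sup>2" "b \<le> (max (sqrt a) (sqrt b))\<^sup>2"
    if "0 \<le> a" "0 \<le> b" for a b :: real
    using power_mono[OF max.cobounded1[of "sqrt a" "sqrt b"], of 2]
      power_mono[OF max.cobounded2[of "sqrt b" "sqrt a"], of 2] that by simp_all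
  have "(\<Sum>j\<in>{1..m}. mmult (madj (x j)) (x j)) \<in> S_space"
    and "(\<Sum>j\<in>{1..m}. mmult (x j) (madj (x j))) \<in> S_space"
    using assms by (auto intro!: S_space_sum S_space_mmult S_space_madj)
  from this[THEN Snorm_nonneg] show
    "Snorm k (\<Sum>j\<in>{1..m}. mmult (madj (x j)) (x j)) \<le> (rcnorm k m x)\<^sup>2"
    "Snorm k (\<Sum>j\<in>{1..m}. mmult (x j) (madj (x j))) \<le> (rcnorm k m x)\<^sup>2"
    unfolding rcnorm_def by (rule max_sqrt)+
qed

lemma sum_Snorm_sq_le_rcnorm:
  assumes x: "\<And>j. j \<in> {1..m} \<Longrightarrow> x j \<in> S_space"
  shows "(\<Sum>j\<in>{1..m}. (Snorm n (x j))\<^sup>2) \<le> pi\<^sup>2 / 6 * (rcnorm (2*n+1) m x)\<^sup>2"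
proof (rule sum_Snorm_sq_le_diag[OF _ x])
  fix l
  let ?R = "rcnorm (2*n+1) m x"
  have "(\<Sum>j\<in>{1..m}. colsq (x j) l) * real (Suc l) ^ (2*(2*n+1))
      \<le> Snorm (2*n+1) (\<Sum>j\<in>{1..m}. mmult (madj (x j)) (x j))"
    using x by (intro sum_diag_le_Snorm) (auto simp: S_space_mmult S_space_madj mmult_madj_left_diag colsq_nonneg)
  also have "\<dots> \<le> ?R\<^sup>2" by (rule Snorm_le_rcnorm_sq(1)[OF x])
  finally have col: "(\<Sum>j\<in>{1..m}. colsq (x j) l) * real (Suc l) ^ (4*n+2) \<le> ?R\<^sup>2"
    by simp
  have "(\<Sum>j\<in>{1..m}. rowsq (x j) l) * real (Suc l) ^ (2*(2*n+1))
      \<le> Snorm (2*n+1) (\<Sum>j\<in>{1..m}. mmult (x j) (madj (x j)))"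
    using x by (intro sum_diag_le_Snorm) (auto simp: S_space_mmult S_space_madj mmult_madj_right_diag rowsq_nonneg)
  also have "\<dots> \<le> ?R\<^sup>2" by (rule Snorm_le_rcnorm_sq(2)[OF x])
  finally have row: "(\<Sum>j\<in>{1..m}. rowsq (x j) l) * real (Suc l) ^ (4*n+2) \<le> ?R\<^sup>2"
    by simp
  have average_le: "((a + b) / 2) * w \<le> R" if "a * w \<le> R" "b * w \<le> R" for a b w R :: real
  proof -
    have "a * w + b * w \<le> R + R" using add_mono[OF that] .
    thus ?thesis by (simp add: field_simps)
  qed
  have sum_average: "(\<Sum>j\<in>{1..m}. (colsq (x j) l + rowsq (x j) l) / 2)
      = ((\<Sum>j\<in>{1..m}. colsq (x j) l) + (\<Sum>j\<in>{1..m}. rowsq (x j) l)) / 2"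
    by (simp only: sum_divide_distrib[symmetric] sum.distrib)
  show "(\<Sum>j\<in>{1..m}. (colsq (x j) l + rowsq (x j) l) / 2) * real (Suc l) ^ (4*n+2) \<le> ?R\<^sup>2"
    unfolding sum_average by (rule average_le[OF col row])
qed simp

lemma rcnorm_nonneg:
  assumes "\<And>j. j \<in> {1..m} \<Longrightarrow> x j \<in> S_space"
  shows "0 \<le> rcnorm k m x"
proof -
  have "(\<Sum>j\<in>{1..m}. mmult (madj (x j)) (x j)) \<in> S_space"
    using assms by (auto intro!: S_space_sum S_space_mmult S_space_madj)
  thus ?thesis unfolding rcnorm_def by (simp add: le_max_iff_disj Snorm_nonneg)
qed

lemma rcnorm_eq_0_imp_zero:
  assumes x: "\<And>j. j \<in> {1..m} \<Longrightarrow> x j \<in> S_space"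
    and "rcnorm (2*n+1) m x = 0" "j \<in> {1..m}"
  shows "x j = 0"
proof (rule Snorm_le_0_imp_zero[OF x[OF \<open>j \<in> {1..m}\<close>]])
  have "(Snorm n (x j))\<^sup>2 \<le> (\<Sum>j\<in>{1..m}. (Snorm n (x j))\<^sup>2)"
    using assms(3) by (intro member_le_sum) auto
  also have "\<dots> \<le> pi\<^sup>2 / 6 * (rcnorm (2*n+1) m x)\<^sup>2"
    using x by (rule sum_Snorm_sq_le_rcnorm)
  also have "\<dots> = 0" using assms(2) by simp
  finally show "Snorm n (x j) \<le> 0" by simp
qed

lemma cmod_le_Snorm_if_homogeneous:
  assumes hom: "\<And>x c. x \<in> S_space \<Longrightarrow> \<phi> (\<lambda>i j. c * x i j) = c * \<phi> x"
    and bound: "\<And>x. x \<in> S_space \<Longrightarrow> Snorm n x \<le> 1 \<Longrightarrow> cmod (\<phi> x) \<le> b"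
    and x: "x \<in> S_space"
  shows "cmod (\<phi> x) \<le> b * Snorm n x"
proof (cases "Snorm n x = 0")
  case True
  hence "x = 0" using Snorm_le_0_imp_zero[OF x, of n] by simp
  hence "(\<lambda>i j. 0 * x i j) = x" by (simp add: fun_eq_iff)
  hence "\<phi> x = 0 * \<phi> x" using hom[OF x, of 0] by simp
  thus ?thesis using True by simp
next
  case False
  define s where "s = Snorm n x"
  have "0 < s" using False Snorm_nonneg[OF x, of n] by (simp add: s_def)
  let ?x' = "\<lambda>i j. complex_of_real (1 / s) * x i j"
  have "Snorm n ?x' \<le> cmod (complex_of_real (1 / s)) * s"
    unfolding s_def by (rule Snorm_scale_le[OF x])
  also have "\<dots> = 1" using \<open>0 < s\<close> by (simp only: norm_of_real) simp
  finally have "cmod (\<phi> ?x') \<le> b" by (rule bound[OF S_space_scale[OF x]])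
  moreover have "cmod (\<phi> ?x') = cmod (\<phi> x) / s"
    using \<open>0 < s\<close> by (simp only: hom[OF x] norm_mult norm_of_real) simp
  ultimately show ?thesis using \<open>0 < s\<close> by (simp add: s_def pos_divide_le_eq)
qed

lemma cmod_bilinear_le:
  assumes u: "cont_bilinear u"
    and bound: "\<And>x y. x \<in> S_space \<Longrightarrow> y \<in> S_space \<Longrightarrow> Snorm n x \<le> 1 \<Longrightarrow> Snorm n y \<le> 1
                  \<Longrightarrow> cmod (u x y) \<le> b"
    and x: "x \<in> S_space" and y: "y \<in> S_space"
  shows "cmod (u x y) \<le> b * Snorm n x * Snorm n y"
proof -
  have hom_left: "u (\<lambda>i j. c * x i j) y = c * u x y"
    and hom_right: "u y (\<lambda>i j. c * x i j) = c * u y x"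
    if "x \<in> S_space" "y \<in> S_space" for x y c
    using u that unfolding cont_bilinear_def by blast+
  have "cmod (u x y') \<le> b * Snorm n x" if "y' \<in> S_space" "Snorm n y' \<le> 1" for y'
    by (rule cmod_le_Snorm_if_homogeneous[OF hom_left _ x]) (use bound that in auto)
  hence "cmod (u x y) \<le> (b * Snorm n x) * Snorm n y"
    by (intro cmod_le_Snorm_if_homogeneous[OF hom_right[OF _ x] _ y])
  thus ?thesis by simp
qed

lemma cont_bilinear_zero:
  assumes "cont_bilinear u" "y \<in> S_space"
  shows "u 0 y = 0" "u y 0 = 0"
proof -
  have zero: "(\<lambda>i j. 0 * y i j) = 0" by (simp add: fun_eq_iff)
  have "u (\<lambda>i j. 0 * y i j) y = 0 * u y y" "u y (\<lambda>i j. 0 * y i j) = 0 * u y y"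
    using assms unfolding cont_bilinear_def by blast+
  thus "u 0 y = 0" "u y 0 = 0" unfolding zero by simp_all
qed

lemma S_dual_zero:
  assumes "\<phi> \<in> S_dual"
  shows "\<phi> 0 = 0"
proof -
  have zero: "(\<lambda>i j. 0 * (0::mat) i j) = 0" by (simp add: fun_eq_iff)
  have "\<phi> (\<lambda>i j. 0 * (0::mat) i j) = 0 * \<phi> 0"
    using assms S_space_zero unfolding S_dual_def by blast
  thus ?thesis unfolding zero by simp
qed

lemma bnorm_star_ge:
  "x \<in> S_space \<Longrightarrow> y \<in> S_space \<Longrightarrow> Snorm n x \<le> 1 \<Longrightarrow> Snorm n y \<le> 1
    \<Longrightarrow> ereal (cmod (u x y)) \<le> bnorm_star n u"
  unfolding bnorm_star_def by (rule Sup_upper) blast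

lemma bnorm_star_nonneg: "0 \<le> bnorm_star n u"
proof -
  have "ereal (cmod (u 0 0)) \<le> bnorm_star n u"
    by (rule bnorm_star_ge[OF S_space_zero S_space_zero]) (simp_all add: Snorm_zero)
  thus ?thesis by (rule order_trans[rotated]) simp
qed

lemma fnorm_star_ge:
  "x \<in> S_space \<Longrightarrow> Snorm n x \<le> 1 \<Longrightarrow> ereal (cmod (\<phi> x)) \<le> fnorm_star n \<phi>"
  unfolding fnorm_star_def by (rule Sup_upper) blast

lemma fnorm_star_nonneg: "0 \<le> fnorm_star n \<phi>"
proof -
  have "ereal (cmod (\<phi> 0)) \<le> fnorm_star n \<phi>"
    by (rule fnorm_star_ge[OF S_space_zero]) (simp add: Snorm_zero)
  thus ?thesis by (rule order_trans[rotated]) simp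
qed

lemma sum_Snorm_mult_le_msq:
  assumes "(m, x, y) \<in> reps z"
  shows "(\<Sum>j\<in>{1..m}. Snorm n (x j) * Snorm n (y j))
    \<le> pi\<^sup>2 / 6 * (sqrt (Snorm (2*n+1) (\<Sum>j\<in>{1..m}. msq (x j)))
                 * sqrt (Snorm (2*n+1) (\<Sum>j\<in>{1..m}. msq (y j))))"
proof (rule sum_mult_le_of_sum_sq_le)
  have x: "\<And>j. j \<in> {1..m} \<Longrightarrow> x j \<in> S_space" and y: "\<And>j. j \<in> {1..m} \<Longrightarrow> y j \<in> S_space"
    using assms unfolding reps_def by auto
  show "(\<Sum>j\<in>{1..m}. (Snorm n (x j))\<^sup>2) \<le> pi\<^sup>2 / 6 * Snorm (2*n+1) (\<Sum>j\<in>{1..m}. msq (x j))"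
    using x by (intro sum_Snorm_sq_le_msq) simp_all
  show "(\<Sum>j\<in>{1..m}. (Snorm n (y j))\<^sup>2) \<le> pi\<^sup>2 / 6 * Snorm (2*n+1) (\<Sum>j\<in>{1..m}. msq (y j))"
    using y by (intro sum_Snorm_sq_le_msq) simp_all
  show "0 \<le> Snorm n (x j)" "0 \<le> Snorm n (y j)" if "j \<in> {1..m}" for j
    using x y that by (simp_all add: Snorm_nonneg)
qed simp

lemma ah_norm_nonneg:
  assumes "z \<in> SS_tensor"
  shows "0 \<le> ah_norm n z"
  unfolding ah_norm_def setcompr_eq_image_prod3
proof (rule cINF_greatest)
  show "reps z \<noteq> {}" using assms unfolding SS_tensor_def by simp
next
  fix r assume "r \<in> reps z"
  moreover obtain m x y where r: "r = (m, x, y)" by (cases r)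
  ultimately have "(\<Sum>j\<in>{1..m}. msq (x j)) \<in> S_space" "(\<Sum>j\<in>{1..m}. msq (y j)) \<in> S_space"
    unfolding reps_def by (auto intro!: S_space_sum S_space_msq)
  thus "0 \<le> (case r of (m, x, y) \<Rightarrow> sqrt (Snorm n (\<Sum>j\<in>{1..m}. msq (x j)))
                                     * sqrt (Snorm n (\<Sum>j\<in>{1..m}. msq (y j))))"
    unfolding r by (simp add: Snorm_nonneg)
qed

lemma pi_norm_le_ah_norm:
  assumes "z \<in> SS_tensor"
  shows "pi_norm n z \<le> pi\<^sup>2 / 6 * ah_norm (2*n+1) z"
  unfolding pi_norm_def ah_norm_def setcompr_eq_image_prod3
proof (rule cINF_le_mult_cINF)
  show "reps z \<noteq> {}" using assms unfolding SS_tensor_def by simp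
  fix r assume "r \<in> reps z"
  moreover obtain m x y where r: "r = (m, x, y)" by (cases r)
  ultimately show "0 \<le> (case r of (m, x, y) \<Rightarrow> \<Sum>j\<in>{1..m}. Snorm n (x j) * Snorm n (y j))"
    and "(case r of (m, x, y) \<Rightarrow> \<Sum>j\<in>{1..m}. Snorm n (x j) * Snorm n (y j))
      \<le> pi\<^sup>2 / 6 * (case r of (m, x, y) \<Rightarrow> sqrt (Snorm (2*n+1) (\<Sum>j\<in>{1..m}. msq (x j)))
                                            * sqrt (Snorm (2*n+1) (\<Sum>j\<in>{1..m}. msq (y j))))"
    unfolding r using sum_Snorm_mult_le_msq[of m x y z n]
    by (auto simp: reps_def intro!: sum_nonneg mult_nonneg_nonneg Snorm_nonneg)
qed simp

lemma cmod_sum_bilinear_le_of_bound: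
  assumes u: "cont_bilinear u" and "0 \<le> b"
    and bound: "\<And>x y. x \<in> S_space \<Longrightarrow> y \<in> S_space \<Longrightarrow> Snorm n x \<le> 1 \<Longrightarrow> Snorm n y \<le> 1
                  \<Longrightarrow> cmod (u x y) \<le> b"
    and x: "\<And>j. j \<in> {1..m} \<Longrightarrow> x j \<in> S_space" and y: "\<And>j. j \<in> {1..m} \<Longrightarrow> y j \<in> S_space"
  shows "cmod (\<Sum>j\<in>{1..m}. u (x j) (y j))
    \<le> b * (pi\<^sup>2 / 6 * rcnorm (2*n+1) m x * rcnorm (2*n+1) m y)"
proof -
  let ?Rx = "rcnorm (2*n+1) m x" and ?Ry = "rcnorm (2*n+1) m y"
  have "cmod (\<Sum>j\<in>{1..m}. u (x j) (y j)) \<le> (\<Sum>j\<in>{1..m}. cmod (u (x j) (y j)))"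
    by (rule norm_sum)
  also have "\<dots> \<le> (\<Sum>j\<in>{1..m}. b * Snorm n (x j) * Snorm n (y j))"
    using x y by (intro sum_mono cmod_bilinear_le[OF u bound]) auto
  also have "\<dots> = b * (\<Sum>j\<in>{1..m}. Snorm n (x j) * Snorm n (y j))"
    by (simp add: sum_distrib_left mult.assoc)
  also have "\<dots> \<le> b * (pi\<^sup>2 / 6 * (sqrt (?Rx\<^sup>2) * sqrt (?Ry\<^sup>2)))"
    using x y \<open>0 \<le> b\<close>
    by (intro mult_left_mono sum_mult_le_of_sum_sq_le sum_Snorm_sq_le_rcnorm) (auto simp: Snorm_nonneg)
  also have "\<dots> = b * (pi\<^sup>2 / 6 * ?Rx * ?Ry)"
    using rcnorm_nonneg[OF x] rcnorm_nonneg[OF y] by (simp add: mult.assoc)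
  finally show ?thesis .
qed

lemma cmod_sum_bilinear_le_rcnorm:
  assumes u: "cont_bilinear u" and xy: "\<forall>j\<in>{1..m}. x j \<in> S_space \<and> y j \<in> S_space"
  shows "ereal (cmod (\<Sum>j\<in>{1..m}. u (x j) (y j)))
    \<le> ereal (pi\<^sup>2 / 6) * bnorm_star n u * ereal (rcnorm (2*n+1) m x) * ereal (rcnorm (2*n+1) m y)"
proof -
  let ?K = "pi\<^sup>2 / 6" and ?Rx = "rcnorm (2*n+1) m x" and ?Ry = "rcnorm (2*n+1) m y"
  have x: "\<And>j. j \<in> {1..m} \<Longrightarrow> x j \<in> S_space" and y: "\<And>j. j \<in> {1..m} \<Longrightarrow> y j \<in> S_space"
    using xy by auto
  have "ereal (cmod (\<Sum>j\<in>{1..m}. u (x j) (y j))) \<le> bnorm_star n u * ereal (?K * ?Rx * ?Ry)"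
  proof (rule ereal_le_times_ereal[OF bnorm_star_nonneg])
    show "0 \<le> ?K * ?Rx * ?Ry" using rcnorm_nonneg[OF x] rcnorm_nonneg[OF y] by simp
  next
    fix b assume b: "bnorm_star n u = ereal b"
    show "cmod (\<Sum>j\<in>{1..m}. u (x j) (y j)) \<le> b * (?K * ?Rx * ?Ry)"
    proof (rule cmod_sum_bilinear_le_of_bound[OF u _ _ x y])
      show "0 \<le> b" using bnorm_star_nonneg[of n u] b by simp
      show "cmod (u x' y') \<le> b" if "x' \<in> S_space" "y' \<in> S_space" "Snorm n x' \<le> 1" "Snorm n y' \<le> 1"
        for x' y' using bnorm_star_ge[OF that, of u] b by simp
    qed
  next
    assume "?K * ?Rx * ?Ry = 0"
    hence "?Rx = 0 \<or> ?Ry = 0" by simp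
    have "u (x j) (y j) = 0" if "j \<in> {1..m}" for j
    proof (cases "?Rx = 0")
      case True
      with x have "x j = 0" using that by (rule rcnorm_eq_0_imp_zero)
      thus ?thesis using cont_bilinear_zero(1)[OF u y[OF that]] by simp
    next
      case False
      with \<open>?Rx = 0 \<or> ?Ry = 0\<close> y have "y j = 0" using that by (intro rcnorm_eq_0_imp_zero) auto
      thus ?thesis using cont_bilinear_zero(2)[OF u x[OF that]] by simp
    qed
    thus "cmod (\<Sum>j\<in>{1..m}. u (x j) (y j)) \<le> 0" by simp
  qed
  also have "bnorm_star n u * ereal (?K * ?Rx * ?Ry) = ereal ?K * bnorm_star n u * ereal ?Rx * ereal ?Ry"
    by (simp add: ac_simps)
  finally show ?thesis .
qed

lemma sum_cmod_sq_le_of_bound: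
  assumes \<phi>: "\<phi> \<in> S_dual"
    and bound: "\<And>x. x \<in> S_space \<Longrightarrow> Snorm n x \<le> 1 \<Longrightarrow> cmod (\<phi> x) \<le> f"
    and x: "\<And>j. j \<in> {1..m} \<Longrightarrow> x j \<in> S_space"
  shows "(\<Sum>j\<in>{1..m}. (cmod (\<phi> (x j)))\<^sup>2) \<le> f\<^sup>2 * (pi\<^sup>2 / 6 * (rcnorm (2*n+1) m x)\<^sup>2)"
proof -
  have hom: "\<phi> (\<lambda>i j. c * x i j) = c * \<phi> x" if "x \<in> S_space" for x c
    using \<phi> that unfolding S_dual_def by blast
  have "(\<Sum>j\<in>{1..m}. (cmod (\<phi> (x j)))\<^sup>2) \<le> (\<Sum>j\<in>{1..m}. (f * Snorm n (x j))\<^sup>2)"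
    using x by (intro sum_mono power_mono cmod_le_Snorm_if_homogeneous[OF hom bound]) auto
  also have "\<dots> = f\<^sup>2 * (\<Sum>j\<in>{1..m}. (Snorm n (x j))\<^sup>2)"
    by (simp add: sum_distrib_left power_mult_distrib)
  also have "\<dots> \<le> f\<^sup>2 * (pi\<^sup>2 / 6 * (rcnorm (2*n+1) m x)\<^sup>2)"
    using x by (intro mult_left_mono sum_Snorm_sq_le_rcnorm) auto
  finally show ?thesis .
qed

lemma sum_cmod_sq_le_rcnorm:
  assumes \<phi>: "\<phi> \<in> S_dual" and xs: "\<forall>j\<in>{1..m}. x j \<in> S_space"
  shows "ereal (\<Sum>j\<in>{1..m}. (cmod (\<phi> (x j)))\<^sup>2)
    \<le> ereal (pi\<^sup>2 / 6) * (fnorm_star n \<phi> * ereal (rcnorm (2*n+1) m x))\<^sup>2"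
proof -
  let ?K = "pi\<^sup>2 / 6" and ?R = "rcnorm (2*n+1) m x" and ?F = "fnorm_star n \<phi>"
  have x: "\<And>j. j \<in> {1..m} \<Longrightarrow> x j \<in> S_space" using xs by auto
  have "ereal (\<Sum>j\<in>{1..m}. (cmod (\<phi> (x j)))\<^sup>2) \<le> (?F * ?F) * ereal (?K * ?R\<^sup>2)"
  proof (rule ereal_le_times_ereal)
    show "0 \<le> ?F * ?F" by (intro ereal_0_le_mult fnorm_star_nonneg)
    show "0 \<le> ?K * ?R\<^sup>2" by simp
  next
    fix b assume "?F * ?F = ereal b"
    then obtain f where f: "?F = ereal f" "b = f * f" using fnorm_star_nonneg[of n \<phi>]
      by (cases ?F) auto
    have "(\<Sum>j\<in>{1..m}. (cmod (\<phi> (x j)))\<^sup>2) \<le> f\<^sup>2 * (?K * ?R\<^sup>2)"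
    proof (rule sum_cmod_sq_le_of_bound[OF \<phi> _ x])
      show "cmod (\<phi> x') \<le> f" if "x' \<in> S_space" "Snorm n x' \<le> 1" for x'
        using fnorm_star_ge[OF that, of \<phi>] f by simp
    qed
    thus "(\<Sum>j\<in>{1..m}. (cmod (\<phi> (x j)))\<^sup>2) \<le> b * (?K * ?R\<^sup>2)"
      by (simp add: f power2_eq_square)
  next
    assume "?K * ?R\<^sup>2 = 0"
    hence "?R = 0" by simp
    have "\<phi> (x j) = 0" if "j \<in> {1..m}" for j
    proof -
      from x \<open>?R = 0\<close> have "x j = 0" using that by (rule rcnorm_eq_0_imp_zero)
      thus ?thesis using S_dual_zero[OF \<phi>] by simp
    qed
    thus "(\<Sum>j\<in>{1..m}. (cmod (\<phi> (x j)))\<^sup>2) \<le> 0" by simp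
  qed
  also have "(?F * ?F) * ereal (?K * ?R\<^sup>2) = ereal ?K * (?F * ereal ?R)\<^sup>2"
    by (simp add: power2_eq_square ac_simps)
  finally show ?thesis .
qed

theorem theorem2p3:
  shows "\<exists>K::real. K \<le> pi\<^sup>2 / 6 \<and>
    (\<forall>n\<ge>1. \<forall>z\<in>SS_tensor. pi_norm n z \<le> 2 * K * ah_norm (2*n+1) z) \<and>
    (\<forall>u n m (x::nat \<Rightarrow> mat) (y::nat \<Rightarrow> mat). cont_bilinear u \<and> n \<ge> 1 \<and> m \<ge> 1 \<and>
        (\<forall>j\<in>{1..m}. x j \<in> S_space \<and> y j \<in> S_space) \<longrightarrow>
        ereal (cmod (\<Sum>j\<in>{1..m}. u (x j) (y j)))
          \<le> ereal K * bnorm_star n u * ereal (rcnorm (2*n+1) m x) * ereal (rcnorm (2*n+1) m y)) \<and>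
    (\<forall>\<phi> n m (x::nat \<Rightarrow> mat). \<phi> \<in> S_dual \<and> n \<ge> 1 \<and> m \<ge> 1 \<and>
        (\<forall>j\<in>{1..m}. x j \<in> S_space) \<longrightarrow>
        ereal (\<Sum>j\<in>{1..m}. (cmod (\<phi> (x j)))\<^sup>2)
          \<le> ereal K * (fnorm_star n \<phi> * ereal (rcnorm (2*n+1) m x))\<^sup>2)"
proof (intro exI[of _ "pi\<^sup>2 / 6"] conjI allI impI ballI)
  fix n :: nat and z assume z: "z \<in> SS_tensor"
  have "pi_norm n z \<le> pi\<^sup>2 / 6 * ah_norm (2*n+1) z" using z by (rule pi_norm_le_ah_norm)
  also have "\<dots> \<le> 2 * (pi\<^sup>2 / 6) * ah_norm (2*n+1) z" using ah_norm_nonneg[OF z] by simp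
  finally show "pi_norm n z \<le> 2 * (pi\<^sup>2 / 6) * ah_norm (2*n+1) z" .
next
  fix u and n m :: nat and x y :: "nat \<Rightarrow> mat"
  assume "cont_bilinear u \<and> n \<ge> 1 \<and> m \<ge> 1 \<and> (\<forall>j\<in>{1..m}. x j \<in> S_space \<and> y j \<in> S_space)"
  thus "ereal (cmod (\<Sum>j\<in>{1..m}. u (x j) (y j)))
    \<le> ereal (pi\<^sup>2 / 6) * bnorm_star n u * ereal (rcnorm (2*n+1) m x) * ereal (rcnorm (2*n+1) m y)"
    by (blast intro: cmod_sum_bilinear_le_rcnorm)
next
  fix \<phi> and n m :: nat and x :: "nat \<Rightarrow> mat"
  assume "\<phi> \<in> S_dual \<and> n \<ge> 1 \<and> m \<ge> 1 \<and> (\<forall>j\<in>{1..m}. x j \<in> S_space)"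
  thus "ereal (\<Sum>j\<in>{1..m}. (cmod (\<phi> (x j)))\<^sup>2)
    \<le> ereal (pi\<^sup>2 / 6) * (fnorm_star n \<phi> * ereal (rcnorm (2*n+1) m x))\<^sup>2"
    by (blast intro: sum_cmod_sq_le_rcnorm)
qed simp

end
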